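(* Restrict to the category $\overline{\mathbf{dCat}}$ of strict double categories and strict double functors. For each $n\ge1$ let $H_n\gamma:\overline{\mathbf{dCat}}\to\mathbf{Cat}$ send $C$ to the $n$-th horizontal category $H^{\gamma C}_n$ and $F$ to the restriction of $\tau(\gamma F)$ to $H^{\gamma C}_n$, and for $m\le n$ let $\nu_{m,n}:H_m\gamma\Rightarrow H_n\gamma$ be given by the inclusions $H^{\gamma C}_m\subseteq H^{\gamma C}_n$. Then the functor $\gamma^\tau=\tau\gamma$, sending $C$ to the transversal category $\tau(\gamma C)$ and $F$ to $\tau(\gamma F)$, is the colimit $\varinjlim_n H_n\gamma$ of this diagram.
   Context: For a strict double category $C$: $C_0$ is the category of objects and vertical morphisms, $C_1$ the category of horizontal morphisms and 2-morphisms (vertical composition); horizontal composition $\ast$ is strictly associative and unital. A 2-morphism is globular if its source and target are identity vertical morphisms. The globularily generated piece $\gamma C$ is the smallest sub-double category of $C$ containing all objects, vertical and horizontal morphisms and globular 2-morphisms; $\gamma F$ is the restriction of a double functor $F$. The transversal category $\tau C$ has objects the vertical morphisms and morphisms the 2-morphisms of $C$ (from $s\Phi$ to $t\Phi$), composed horizontally; for a strict double functor $F$, $\tau F$ acts by the morphism function of $F_0$ on objects and that of $F_1$ on morphisms. For a strict double category $E$: $H^E_1$ consists of globular 2-morphisms and horizontal identities of vertical morphisms; $V^E_1$ is the subcategory of $E_1$ generated by $H^E_1$ under vertical composition; for $n>1$, $H^E_n$ is the set of horizontal composites of composable finite sequences of morphisms of $V^E_{n-1}$ and $V^E_n$ the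 subcategory of $E_1$ it generates. $H^E_n$ forms a subcategory of $\tau E$ with all objects (the $n$-th horizontal category), and strict double functors map $H^E_n$ into $H^{E'}_n$ between globularily generated double categories. *)

theory Defs
  imports Main
begin

section \<open>Categories (as data with carriers) and functors between them\<close>

record ('o,'m) cat =
  cObj :: "'o set"
  cMor :: "'m set"
  cDom :: "'m \<Rightarrow> 'o"
  cCod :: "'m \<Rightarrow> 'o"
  cComp :: "'m \<Rightarrow> 'm \<Rightarrow> 'm"   (* cComp g f = g o f, defined when cCod f = cDom g *)
  cId :: "'o \<Rightarrow> 'm"

definition category :: "('o,'m) cat \<Rightarrow> bool" where
  "category A \<longleftrightarrow>
     (\<forall>a\<in>cObj A. cId A a \<in> cMor A \<and> cDom A (cId A a) = a \<and> cCod A (cId A a) = a) \<and>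
     (\<forall>f\<in>cMor A. cDom A f \<in> cObj A \<and> cCod A f \<in> cObj A) \<and>
     (\<forall>f\<in>cMor A. \<forall>g\<in>cMor A. cCod A f = cDom A g \<longrightarrow>
        cComp A g f \<in> cMor A \<and> cDom A (cComp A g f) = cDom A f \<and> cCod A (cComp A g f) = cCod A g) \<and>
     (\<forall>f\<in>cMor A. \<forall>g\<in>cMor A. \<forall>h\<in>cMor A. cCod A f = cDom A g \<longrightarrow> cCod A g = cDom A h \<longrightarrow>
        cComp A h (cComp A g f) = cComp A (cComp A h g) f) \<and>
     (\<forall>f\<in>cMor A. cComp A f (cId A (cDom A f)) = f \<and> cComp A (cId A (cCod A f)) f = f)"

record ('a,'b,'c,'d) fctr =
  fo :: "'a \<Rightarrow> 'c"
  fm :: "'b \<Rightarrow> 'd"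

definition is_functor :: "('a,'b) cat \<Rightarrow> ('c,'d) cat \<Rightarrow> ('a,'b,'c,'d) fctr \<Rightarrow> bool" where
  "is_functor A B F \<longleftrightarrow>
     (\<forall>a\<in>cObj A. fo F a \<in> cObj B) \<and>
     (\<forall>f\<in>cMor A. fm F f \<in> cMor B \<and> cDom B (fm F f) = fo F (cDom A f) \<and> cCod B (fm F f) = fo F (cCod A f)) \<and>
     (\<forall>a\<in>cObj A. fm F (cId A a) = cId B (fo F a)) \<and>
     (\<forall>f\<in>cMor A. \<forall>g\<in>cMor A. cCod A f = cDom A g \<longrightarrow> fm F (cComp A g f) = cComp B (fm F g) (fm F f))"

text \<open>Equality of functors with domain A (functions are compared on the carriers of A only).\<close>
definition functor_eq :: "('a,'b) cat \<Rightarrow> ('a,'b,'c,'d) fctr \<Rightarrow> ('a,'b,'c,'d) fctr \<Rightarrow> bool" where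
  "functor_eq A F G \<longleftrightarrow> (\<forall>a\<in>cObj A. fo F a = fo G a) \<and> (\<forall>f\<in>cMor A. fm F f = fm G f)"

definition fcomp :: "('c,'d,'e,'f) fctr \<Rightarrow> ('a,'b,'c,'d) fctr \<Rightarrow> ('a,'b,'e,'f) fctr" where
  "fcomp G F = \<lparr>fo = fo G \<circ> fo F, fm = fm G \<circ> fm F\<rparr>"

definition fid :: "('a,'b,'a,'b) fctr" where
  "fid = \<lparr>fo = id, fm = id\<rparr>"

section \<open>Strict double categories and strict double functors\<close>

text \<open>Objects dOb; vertical morphisms dVM (category C0, composition dvcmp g f = g o f);
  horizontal morphisms dHM with source/target objects dhdom/dhcod and horizontal composition
  dhcmp h k (h first, then k), horizontal identities dhid; 2-morphisms dCells with
  horizontal source/target dtop/dbot (domain/codomain in C1), vertical source/target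
  dleft = s, dright = t; vertical composition dcvcmp Psi Phi (Phi first), vertical identities dcvid h
  (identities of C1); horizontal composition dchcmp Phi Psi (with dright Phi = dleft Psi) and
  horizontal identities dchid f of vertical morphisms (the unit functor u on morphisms).\<close>

record ('o,'v,'h,'c) dcat =
  dOb :: "'o set"
  dVM :: "'v set"
  dvdom :: "'v \<Rightarrow> 'o"
  dvcod :: "'v \<Rightarrow> 'o"
  dvcmp :: "'v \<Rightarrow> 'v \<Rightarrow> 'v"
  dvid :: "'o \<Rightarrow> 'v"
  dHM :: "'h set"
  dhdom :: "'h \<Rightarrow> 'o"
  dhcod :: "'h \<Rightarrow> 'o"
  dhcmp :: "'h \<Rightarrow> 'h \<Rightarrow> 'h"
  dhid :: "'o \<Rightarrow> 'h"
  dCells :: "'c set"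
  dtop :: "'c \<Rightarrow> 'h"
  dbot :: "'c \<Rightarrow> 'h"
  dleft :: "'c \<Rightarrow> 'v"
  dright :: "'c \<Rightarrow> 'v"
  dcvcmp :: "'c \<Rightarrow> 'c \<Rightarrow> 'c"
  dcvid :: "'h \<Rightarrow> 'c"
  dchcmp :: "'c \<Rightarrow> 'c \<Rightarrow> 'c"
  dchid :: "'v \<Rightarrow> 'c"

definition C0 :: "('o,'v,'h,'c) dcat \<Rightarrow> ('o,'v) cat" where
  "C0 C = \<lparr>cObj = dOb C, cMor = dVM C, cDom = dvdom C, cCod = dvcod C, cComp = dvcmp C, cId = dvid C\<rparr>"

definition C1 :: "('o,'v,'h,'c) dcat \<Rightarrow> ('h,'c) cat" where
  "C1 C = \<lparr>cObj = dHM C, cMor = dCells C, cDom = dtop C, cCod = dbot C, cComp = dcvcmp C, cId = dcvid C\<rparr>"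

definition double_category :: "('o,'v,'h,'c) dcat \<Rightarrow> bool" where
  "double_category C \<longleftrightarrow>
     category (C0 C) \<and> category (C1 C) \<and>
     \<comment> \<open>source and target functors s, t : C1 \<rightarrow> C0\<close>
     is_functor (C1 C) (C0 C) \<lparr>fo = dhdom C, fm = dleft C\<rparr> \<and>
     is_functor (C1 C) (C0 C) \<lparr>fo = dhcod C, fm = dright C\<rparr> \<and>
     \<comment> \<open>unit functor u : C0 \<rightarrow> C1 with s u = t u = id\<close>
     is_functor (C0 C) (C1 C) \<lparr>fo = dhid C, fm = dchid C\<rparr> \<and>
     (\<forall>a\<in>dOb C. dhdom C (dhid C a) = a \<and> dhcod C (dhid C a) = a) \<and>
     (\<forall>f\<in>dVM C. dleft C (dchid C f) = f \<and> dright C (dchid C f) = f) \<and>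
     \<comment> \<open>horizontal composition on horizontal morphisms\<close>
     (\<forall>h\<in>dHM C. \<forall>k\<in>dHM C. dhcod C h = dhdom C k \<longrightarrow>
        dhcmp C h k \<in> dHM C \<and> dhdom C (dhcmp C h k) = dhdom C h \<and> dhcod C (dhcmp C h k) = dhcod C k) \<and>
     (\<forall>h\<in>dHM C. \<forall>k\<in>dHM C. \<forall>l\<in>dHM C. dhcod C h = dhdom C k \<longrightarrow> dhcod C k = dhdom C l \<longrightarrow>
        dhcmp C (dhcmp C h k) l = dhcmp C h (dhcmp C k l)) \<and>
     (\<forall>h\<in>dHM C. dhcmp C (dhid C (dhdom C h)) h = h \<and> dhcmp C h (dhid C (dhcod C h)) = h) \<and>
     \<comment> \<open>horizontal composition on 2-morphisms\<close>
     (\<forall>\<Phi>\<in>dCells C. \<forall>\<Psi>\<in>dCells C. dright C \<Phi> = dleft C \<Psi> \<longrightarrow>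
        dchcmp C \<Phi> \<Psi> \<in> dCells C \<and>
        dtop C (dchcmp C \<Phi> \<Psi>) = dhcmp C (dtop C \<Phi>) (dtop C \<Psi>) \<and>
        dbot C (dchcmp C \<Phi> \<Psi>) = dhcmp C (dbot C \<Phi>) (dbot C \<Psi>) \<and>
        dleft C (dchcmp C \<Phi> \<Psi>) = dleft C \<Phi> \<and> dright C (dchcmp C \<Phi> \<Psi>) = dright C \<Psi>) \<and>
     (\<forall>\<Phi>\<in>dCells C. \<forall>\<Psi>\<in>dCells C. \<forall>\<Xi>\<in>dCells C. dright C \<Phi> = dleft C \<Psi> \<longrightarrow> dright C \<Psi> = dleft C \<Xi> \<longrightarrow>
        dchcmp C (dchcmp C \<Phi> \<Psi>) \<Xi> = dchcmp C \<Phi> (dchcmp C \<Psi> \<Xi>)) \<and>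
     (\<forall>\<Phi>\<in>dCells C. dchcmp C (dchid C (dleft C \<Phi>)) \<Phi> = \<Phi> \<and> dchcmp C \<Phi> (dchid C (dright C \<Phi>)) = \<Phi>) \<and>
     \<comment> \<open>functoriality of horizontal composition C1 \<times>_C0 C1 \<rightarrow> C1 (identities and interchange)\<close>
     (\<forall>h\<in>dHM C. \<forall>k\<in>dHM C. dhcod C h = dhdom C k \<longrightarrow>
        dcvid C (dhcmp C h k) = dchcmp C (dcvid C h) (dcvid C k)) \<and>
     (\<forall>\<Phi>\<in>dCells C. \<forall>\<Psi>\<in>dCells C. \<forall>\<Phi>'\<in>dCells C. \<forall>\<Psi>'\<in>dCells C.
        dright C \<Phi> = dleft C \<Psi> \<longrightarrow> dright C \<Phi>' = dleft C \<Psi>' \<longrightarrow>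
        dbot C \<Phi> = dtop C \<Phi>' \<longrightarrow> dbot C \<Psi> = dtop C \<Psi>' \<longrightarrow>
        dcvcmp C (dchcmp C \<Phi>' \<Psi>') (dchcmp C \<Phi> \<Psi>) = dchcmp C (dcvcmp C \<Phi>' \<Phi>) (dcvcmp C \<Psi>' \<Psi>))"

record ('o,'v,'h,'c) dfun =
  fO :: "'o \<Rightarrow> 'o"
  fV :: "'v \<Rightarrow> 'v"
  fH :: "'h \<Rightarrow> 'h"
  fC :: "'c \<Rightarrow> 'c"

definition restr :: "('a \<Rightarrow> 'b) \<Rightarrow> 'a set \<Rightarrow> 'a \<Rightarrow> 'b" where
  "restr f A = (\<lambda>x. if x \<in> A then f x else undefined)"

text \<open>A strict double functor C \<rightarrow> D. The component maps are required to be extensional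
  (undefined off the carriers of C), so that a double functor is determined by its action on C.\<close>
definition double_functor :: "('o,'v,'h,'c) dcat \<Rightarrow> ('o,'v,'h,'c) dcat \<Rightarrow> ('o,'v,'h,'c) dfun \<Rightarrow> bool" where
  "double_functor C D F \<longleftrightarrow>
     is_functor (C0 C) (C0 D) \<lparr>fo = fO F, fm = fV F\<rparr> \<and>
     is_functor (C1 C) (C1 D) \<lparr>fo = fH F, fm = fC F\<rparr> \<and>
     (\<forall>h\<in>dHM C. dhdom D (fH F h) = fO F (dhdom C h) \<and> dhcod D (fH F h) = fO F (dhcod C h)) \<and>
     (\<forall>\<Phi>\<in>dCells C. dleft D (fC F \<Phi>) = fV F (dleft C \<Phi>) \<and> dright D (fC F \<Phi>) = fV F (dright C \<Phi>)) \<and>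
     (\<forall>h\<in>dHM C. \<forall>k\<in>dHM C. dhcod C h = dhdom C k \<longrightarrow> fH F (dhcmp C h k) = dhcmp D (fH F h) (fH F k)) \<and>
     (\<forall>a\<in>dOb C. fH F (dhid C a) = dhid D (fO F a)) \<and>
     (\<forall>\<Phi>\<in>dCells C. \<forall>\<Psi>\<in>dCells C. dright C \<Phi> = dleft C \<Psi> \<longrightarrow>
        fC F (dchcmp C \<Phi> \<Psi>) = dchcmp D (fC F \<Phi>) (fC F \<Psi>)) \<and>
     (\<forall>f\<in>dVM C. fC F (dchid C f) = dchid D (fV F f)) \<and>
     (\<forall>a. a \<notin> dOb C \<longrightarrow> fO F a = undefined) \<and>
     (\<forall>f. f \<notin> dVM C \<longrightarrow> fV F f = undefined) \<and>
     (\<forall>h. h \<notin> dHM C \<longrightarrow> fH F h = undefined) \<and>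
     (\<forall>\<Phi>. \<Phi> \<notin> dCells C \<longrightarrow> fC F \<Phi> = undefined)"

section \<open>Globularily generated piece and transversal category\<close>

definition globular :: "('o,'v,'h,'c) dcat \<Rightarrow> 'c \<Rightarrow> bool" where
  "globular C \<Phi> \<longleftrightarrow> \<Phi> \<in> dCells C \<and> (\<exists>a\<in>dOb C. dleft C \<Phi> = dvid C a) \<and> (\<exists>b\<in>dOb C. dright C \<Phi> = dvid C b)"

text \<open>2-morphisms of the smallest sub-double category containing all objects, vertical and
  horizontal morphisms and globular 2-morphisms.\<close>
inductive_set gcells :: "('o,'v,'h,'c) dcat \<Rightarrow> 'c set" for C where
  glob: "globular C \<Phi> \<Longrightarrow> \<Phi> \<in> gcells C"
| vid: "h \<in> dHM C \<Longrightarrow> dcvid C h \<in> gcells C"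
| hid: "f \<in> dVM C \<Longrightarrow> dchid C f \<in> gcells C"
| vcmp: "\<Phi> \<in> gcells C \<Longrightarrow> \<Psi> \<in> gcells C \<Longrightarrow> dbot C \<Phi> = dtop C \<Psi> \<Longrightarrow> dcvcmp C \<Psi> \<Phi> \<in> gcells C"
| hcmp: "\<Phi> \<in> gcells C \<Longrightarrow> \<Psi> \<in> gcells C \<Longrightarrow> dright C \<Phi> = dleft C \<Psi> \<Longrightarrow> dchcmp C \<Phi> \<Psi> \<in> gcells C"

definition gamma :: "('o,'v,'h,'c) dcat \<Rightarrow> ('o,'v,'h,'c) dcat" where
  "gamma C = C\<lparr>dCells := gcells C\<rparr>"

definition gammaF :: "('o,'v,'h,'c) dcat \<Rightarrow> ('o,'v,'h,'c) dfun \<Rightarrow> ('o,'v,'h,'c) dfun" where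
  "gammaF C F = F\<lparr>fC := restr (fC F) (gcells C)\<rparr>"

text \<open>Transversal category: objects vertical morphisms, morphisms 2-morphisms from s to t,
  composed horizontally (cComp g f = f * g).\<close>
definition tau :: "('o,'v,'h,'c) dcat \<Rightarrow> ('v,'c) cat" where
  "tau E = \<lparr>cObj = dVM E, cMor = dCells E, cDom = dleft E, cCod = dright E,
            cComp = (\<lambda>g f. dchcmp E f g), cId = dchid E\<rparr>"

definition tauF :: "('o,'v,'h,'c) dfun \<Rightarrow> ('v,'c,'v,'c) fctr" where
  "tauF F = \<lparr>fo = fV F, fm = fC F\<rparr>"

section \<open>Horizontal categories\<close>

definition H1 :: "('o,'v,'h,'c) dcat \<Rightarrow> 'c set" where
  "H1 E = {\<Phi>. globular E \<Phi>} \<union> dchid E ` dVM E"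

inductive_set vgen :: "('o,'v,'h,'c) dcat \<Rightarrow> 'c set \<Rightarrow> 'c set" for E S where
  gen: "\<Phi> \<in> S \<Longrightarrow> \<Phi> \<in> vgen E S"
| idtop: "\<Phi> \<in> vgen E S \<Longrightarrow> dcvid E (dtop E \<Phi>) \<in> vgen E S"
| idbot: "\<Phi> \<in> vgen E S \<Longrightarrow> dcvid E (dbot E \<Phi>) \<in> vgen E S"
| cmp: "\<Phi> \<in> vgen E S \<Longrightarrow> \<Psi> \<in> vgen E S \<Longrightarrow> dbot E \<Phi> = dtop E \<Psi> \<Longrightarrow> dcvcmp E \<Psi> \<Phi> \<in> vgen E S"

definition hcomposable :: "('o,'v,'h,'c) dcat \<Rightarrow> 'c list \<Rightarrow> bool" where
  "hcomposable E xs \<longleftrightarrow> (\<forall>i. Suc i < length xs \<longrightarrow> dright E (xs ! i) = dleft E (xs ! Suc i))"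

fun hcomp_list :: "('o,'v,'h,'c) dcat \<Rightarrow> 'c list \<Rightarrow> 'c" where
  "hcomp_list E [] = undefined"
| "hcomp_list E [x] = x"
| "hcomp_list E (x # y # xs) = dchcmp E x (hcomp_list E (y # xs))"

definition hcomposites :: "('o,'v,'h,'c) dcat \<Rightarrow> 'c set \<Rightarrow> 'c set" where
  "hcomposites E S = {hcomp_list E xs | xs. xs \<noteq> [] \<and> set xs \<subseteq> S \<and> hcomposable E xs}"

text \<open>Hn E n is H^E_n for n \<ge> 1 (Hn E 0 is a dummy value, never used).\<close>
fun Hn :: "('o,'v,'h,'c) dcat \<Rightarrow> nat \<Rightarrow> 'c set" where
  "Hn E 0 = {}"
| "Hn E (Suc 0) = H1 E"
| "Hn E (Suc (Suc k)) = hcomposites E (vgen E (Hn E (Suc k)))"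

definition Vn :: "('o,'v,'h,'c) dcat \<Rightarrow> nat \<Rightarrow> 'c set" where
  "Vn E n = vgen E (Hn E n)"

definition Hcat :: "('o,'v,'h,'c) dcat \<Rightarrow> nat \<Rightarrow> ('v,'c) cat" where
  "Hcat E n = (tau E)\<lparr>cMor := Hn E n\<rparr>"

section \<open>Functors dCat \<rightarrow> Cat, natural transformations, cocones\<close>

record ('o,'v,'h,'c,'a,'b) dCatFun =
  FOb :: "('o,'v,'h,'c) dcat \<Rightarrow> ('a,'b) cat"
  FMor :: "('o,'v,'h,'c) dcat \<Rightarrow> ('o,'v,'h,'c) dcat \<Rightarrow> ('o,'v,'h,'c) dfun \<Rightarrow> ('a,'b,'a,'b) fctr"

definition dfid :: "('o,'v,'h,'c) dcat \<Rightarrow> ('o,'v,'h,'c) dfun" where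
  "dfid C = \<lparr>fO = restr id (dOb C), fV = restr id (dVM C), fH = restr id (dHM C), fC = restr id (dCells C)\<rparr>"

definition dfcomp :: "('o,'v,'h,'c) dcat \<Rightarrow> ('o,'v,'h,'c) dfun \<Rightarrow> ('o,'v,'h,'c) dfun \<Rightarrow> ('o,'v,'h,'c) dfun" where
  "dfcomp C G F = \<lparr>fO = restr (fO G \<circ> fO F) (dOb C), fV = restr (fV G \<circ> fV F) (dVM C),
                    fH = restr (fH G \<circ> fH F) (dHM C), fC = restr (fC G \<circ> fC F) (dCells C)\<rparr>"

definition is_dCat_Cat_functor :: "('o,'v,'h,'c,'a,'b) dCatFun \<Rightarrow> bool" where
  "is_dCat_Cat_functor G \<longleftrightarrow>
     (\<forall>C. double_category C \<longrightarrow> category (FOb G C)) \<and>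
     (\<forall>C D F. double_category C \<longrightarrow> double_category D \<longrightarrow> double_functor C D F \<longrightarrow>
        is_functor (FOb G C) (FOb G D) (FMor G C D F)) \<and>
     (\<forall>C. double_category C \<longrightarrow> functor_eq (FOb G C) (FMor G C C (dfid C)) fid) \<and>
     (\<forall>C D E F F'. double_category C \<longrightarrow> double_category D \<longrightarrow> double_category E \<longrightarrow>
        double_functor C D F \<longrightarrow> double_functor D E F' \<longrightarrow>
        functor_eq (FOb G C) (FMor G C E (dfcomp C F' F)) (fcomp (FMor G D E F') (FMor G C D F)))"

definition nat_trans :: "('o,'v,'h,'c,'a,'b) dCatFun \<Rightarrow> ('o,'v,'h,'c,'x,'y) dCatFun \<Rightarrow>
    (('o,'v,'h,'c) dcat \<Rightarrow> ('a,'b,'x,'y) fctr) \<Rightarrow> bool" where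
  "nat_trans H G \<alpha> \<longleftrightarrow>
     (\<forall>C. double_category C \<longrightarrow> is_functor (FOb H C) (FOb G C) (\<alpha> C)) \<and>
     (\<forall>C D F. double_category C \<longrightarrow> double_category D \<longrightarrow> double_functor C D F \<longrightarrow>
        functor_eq (FOb H C) (fcomp (FMor G C D F) (\<alpha> C)) (fcomp (\<alpha> D) (FMor H C D F)))"

definition Hgamma :: "nat \<Rightarrow> ('o,'v,'h,'c,'v,'c) dCatFun" where
  "Hgamma n = \<lparr>FOb = (\<lambda>C. Hcat (gamma C) n),
               FMor = (\<lambda>C D F. \<lparr>fo = fo (tauF (gammaF C F)),
                                fm = restr (fm (tauF (gammaF C F))) (Hn (gamma C) n)\<rparr>)\<rparr>"

definition gamma_tau :: "('o,'v,'h,'c,'v,'c) dCatFun" where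
  "gamma_tau = \<lparr>FOb = (\<lambda>C. tau (gamma C)), FMor = (\<lambda>C D F. tauF (gammaF C F))\<rparr>"

definition nu :: "nat \<Rightarrow> nat \<Rightarrow> ('o,'v,'h,'c) dcat \<Rightarrow> ('v,'c,'v,'c) fctr" where
  "nu m n C = fid"

definition iota :: "nat \<Rightarrow> ('o,'v,'h,'c) dcat \<Rightarrow> ('v,'c,'v,'c) fctr" where
  "iota n C = fid"

definition is_cocone :: "('o,'v,'h,'c,'a,'b) dCatFun \<Rightarrow> (nat \<Rightarrow> ('o,'v,'h,'c) dcat \<Rightarrow> ('v,'c,'a,'b) fctr) \<Rightarrow> bool" where
  "is_cocone L lam \<longleftrightarrow>
     (\<forall>n\<ge>1. nat_trans (Hgamma n) L (lam n)) \<and>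
     (\<forall>m n C. 1 \<le> m \<longrightarrow> m \<le> n \<longrightarrow> double_category C \<longrightarrow>
        functor_eq (FOb (Hgamma m) C) (fcomp (lam n C) (nu m n C)) (lam m C))"

end

theory Submission
  imports Defs
begin

text \<open>The 2-morphisms of \<open>\<gamma>C\<close> are generated from the globular ones and the horizontal
  identities by vertical and horizontal composition, and each such step raises the index of the
  horizontal categories by at most one: a vertical composite of cells of \<open>H\<^sub>n\<close> lies in
  \<open>V\<^sub>n \<subseteq> H\<^sub>n\<^sub>+\<^sub>1\<close>, and \<open>H\<^sub>n\<close> is closed under horizontal composition. Hence
  \<open>\<tau>(\<gamma>C)\<close> is the union of the increasing chain of wide subcategories \<open>H\<^sub>n\<close>, which double
  functors preserve. A compatible family of functors out of the \<open>H\<^sub>n\<close> therefore glues to a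
  unique functor out of \<open>\<tau>(\<gamma>C)\<close>, naturally in \<open>C\<close>.\<close>

lemma dcell_sides_vertical:
  "double_category C \<Longrightarrow> \<Phi> \<in> dCells C \<Longrightarrow> dleft C \<Phi> \<in> dVM C \<and> dright C \<Phi> \<in> dVM C"
  unfolding double_category_def is_functor_def C0_def C1_def by auto

lemma dcell_sides_horizontal:
  "double_category C \<Longrightarrow> \<Phi> \<in> dCells C \<Longrightarrow> dtop C \<Phi> \<in> dHM C \<and> dbot C \<Phi> \<in> dHM C"
  unfolding double_category_def category_def C1_def by auto

lemma dchid_cell:
  "double_category C \<Longrightarrow> f \<in> dVM C \<Longrightarrow>
     dchid C f \<in> dCells C \<and> dleft C (dchid C f) = f \<and> dright C (dchid C f) = f"
  unfolding double_category_def is_functor_def C0_def C1_def by auto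

lemma dchcmp_cell:
  "double_category C \<Longrightarrow> \<Phi> \<in> dCells C \<Longrightarrow> \<Psi> \<in> dCells C \<Longrightarrow> dright C \<Phi> = dleft C \<Psi> \<Longrightarrow>
     dchcmp C \<Phi> \<Psi> \<in> dCells C \<and> dleft C (dchcmp C \<Phi> \<Psi>) = dleft C \<Phi> \<and>
     dright C (dchcmp C \<Phi> \<Psi>) = dright C \<Psi>"
  unfolding double_category_def by auto

lemma dchcmp_assoc:
  "double_category C \<Longrightarrow> \<Phi> \<in> dCells C \<Longrightarrow> \<Psi> \<in> dCells C \<Longrightarrow> \<Xi> \<in> dCells C \<Longrightarrow>
     dright C \<Phi> = dleft C \<Psi> \<Longrightarrow> dright C \<Psi> = dleft C \<Xi> \<Longrightarrow>
     dchcmp C (dchcmp C \<Phi> \<Psi>) \<Xi> = dchcmp C \<Phi> (dchcmp C \<Psi> \<Xi>)"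
  unfolding double_category_def by blast

lemma dchcmp_units:
  "double_category C \<Longrightarrow> \<Phi> \<in> dCells C \<Longrightarrow>
     dchcmp C (dchid C (dleft C \<Phi>)) \<Phi> = \<Phi> \<and> dchcmp C \<Phi> (dchid C (dright C \<Phi>)) = \<Phi>"
  unfolding double_category_def by blast

lemma dcvid_cell:
  "double_category C \<Longrightarrow> h \<in> dHM C \<Longrightarrow>
     dcvid C h \<in> dCells C \<and> dtop C (dcvid C h) = h \<and> dbot C (dcvid C h) = h \<and>
     dleft C (dcvid C h) = dvid C (dhdom C h) \<and> dright C (dcvid C h) = dvid C (dhcod C h) \<and>
     dhdom C h \<in> dOb C \<and> dhcod C h \<in> dOb C"
  unfolding double_category_def is_functor_def C0_def C1_def category_def by auto

lemma dcvcmp_cell: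
  "double_category C \<Longrightarrow> \<Phi> \<in> dCells C \<Longrightarrow> \<Psi> \<in> dCells C \<Longrightarrow> dbot C \<Phi> = dtop C \<Psi> \<Longrightarrow>
     dcvcmp C \<Psi> \<Phi> \<in> dCells C \<and> dtop C (dcvcmp C \<Psi> \<Phi>) = dtop C \<Phi> \<and>
     dbot C (dcvcmp C \<Psi> \<Phi>) = dbot C \<Psi>"
  unfolding double_category_def category_def C1_def by auto

lemma double_functor_cell:
  "double_functor C D F \<Longrightarrow> \<Phi> \<in> dCells C \<Longrightarrow>
     fC F \<Phi> \<in> dCells D \<and> dtop D (fC F \<Phi>) = fH F (dtop C \<Phi>) \<and> dbot D (fC F \<Phi>) = fH F (dbot C \<Phi>) \<and>
     dleft D (fC F \<Phi>) = fV F (dleft C \<Phi>) \<and> dright D (fC F \<Phi>) = fV F (dright C \<Phi>)"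
  unfolding double_functor_def is_functor_def C0_def C1_def by auto

lemma double_functor_dcvid:
  "double_functor C D F \<Longrightarrow> h \<in> dHM C \<Longrightarrow> fC F (dcvid C h) = dcvid D (fH F h) \<and> fH F h \<in> dHM D"
  unfolding double_functor_def is_functor_def C0_def C1_def by auto

lemma double_functor_dcvcmp:
  "double_functor C D F \<Longrightarrow> \<Phi> \<in> dCells C \<Longrightarrow> \<Psi> \<in> dCells C \<Longrightarrow> dbot C \<Phi> = dtop C \<Psi> \<Longrightarrow>
     fC F (dcvcmp C \<Psi> \<Phi>) = dcvcmp D (fC F \<Psi>) (fC F \<Phi>)"
  unfolding double_functor_def is_functor_def C0_def C1_def by auto

lemma double_functor_dchcmp:
  "double_functor C D F \<Longrightarrow> \<Phi> \<in> dCells C \<Longrightarrow> \<Psi> \<in> dCells C \<Longrightarrow> dright C \<Phi> = dleft C \<Psi> \<Longrightarrow>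
     fC F (dchcmp C \<Phi> \<Psi>) = dchcmp D (fC F \<Phi>) (fC F \<Psi>)"
  unfolding double_functor_def by auto

lemma double_functor_dchid:
  "double_functor C D F \<Longrightarrow> f \<in> dVM C \<Longrightarrow> fC F (dchid C f) = dchid D (fV F f) \<and> fV F f \<in> dVM D"
  unfolding double_functor_def is_functor_def C0_def C1_def by auto

lemma double_functor_dvid:
  "double_functor C D F \<Longrightarrow> a \<in> dOb C \<Longrightarrow> fV F (dvid C a) = dvid D (fO F a) \<and> fO F a \<in> dOb D"
  unfolding double_functor_def is_functor_def C0_def C1_def by auto

lemma double_functor_globular:
  assumes "double_functor C D F" and "globular C \<Phi>"
  shows "globular D (fC F \<Phi>)"
proof -
  from assms(2) obtain a b where
    "\<Phi> \<in> dCells C" "a \<in> dOb C" "dleft C \<Phi> = dvid C a" "b \<in> dOb C" "dright C \<Phi> = dvid C b"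
    unfolding globular_def by blast
  with assms(1) show ?thesis
    unfolding globular_def
    using double_functor_cell[OF assms(1)] double_functor_dvid[OF assms(1)] by auto
qed

section \<open>Horizontal composites of lists of 2-morphisms\<close>

lemma hcomposable_simps [simp]:
  "hcomposable E []"
  "hcomposable E [x]"
  "hcomposable E (x # y # xs) \<longleftrightarrow> dright E x = dleft E y \<and> hcomposable E (y # xs)"
proof -
  show "hcomposable E []" "hcomposable E [x]" by (auto simp: hcomposable_def)
  have "(\<forall>i. Suc i < length (x # y # xs) \<longrightarrow> P i) \<longleftrightarrow> P 0 \<and> (\<forall>i. Suc i < length (y # xs) \<longrightarrow> P (Suc i))"
    for P :: "nat \<Rightarrow> bool"
    by (metis Suc_less_eq length_Cons not0_implies_Suc zero_less_Suc)
  then show "hcomposable E (x # y # xs) \<longleftrightarrow> dright E x = dleft E y \<and> hcomposable E (y # xs)"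
    unfolding hcomposable_def by simp
qed

lemma hcomp_list_cell:
  assumes "double_category C" "xs \<noteq> []" "set xs \<subseteq> dCells C" "hcomposable C xs"
  shows "hcomp_list C xs \<in> dCells C \<and> dleft C (hcomp_list C xs) = dleft C (hd xs) \<and>
    dright C (hcomp_list C xs) = dright C (last xs)"
  using assms
proof (induction xs rule: induct_list012)
  case (3 x y zs)
  then show ?case using dchcmp_cell[of C x "hcomp_list C (y # zs)"] by auto
qed auto

lemma hcomp_list_append:
  assumes "double_category C" "xs \<noteq> []" "ys \<noteq> []" "set xs \<subseteq> dCells C" "set ys \<subseteq> dCells C"
    "hcomposable C xs" "hcomposable C ys" "dright C (last xs) = dleft C (hd ys)"
  shows "hcomposable C (xs @ ys) \<and> hcomp_list C (xs @ ys) = dchcmp C (hcomp_list C xs) (hcomp_list C ys)"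
  using assms
proof (induction xs rule: induct_list012)
  case (2 x)
  then show ?case by (cases ys) auto
next
  case (3 x y zs)
  then have IH: "hcomposable C ((y # zs) @ ys) \<and>
      hcomp_list C ((y # zs) @ ys) = dchcmp C (hcomp_list C (y # zs)) (hcomp_list C ys)"
    by auto
  have "hcomp_list C ((x # y # zs) @ ys) = dchcmp C x (dchcmp C (hcomp_list C (y # zs)) (hcomp_list C ys))"
    using IH by simp
  also have "\<dots> = dchcmp C (dchcmp C x (hcomp_list C (y # zs))) (hcomp_list C ys)"
    using 3 hcomp_list_cell[of C "y # zs"] hcomp_list_cell[of C ys]
    by (intro dchcmp_assoc[symmetric]) auto
  finally show ?case using IH 3 by simp
qed auto

lemma hcomp_list_map:
  assumes "double_functor C D F" "double_category C" "xs \<noteq> []" "set xs \<subseteq> dCells C" "hcomposable C xs"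
  shows "hcomposable D (map (fC F) xs) \<and> fC F (hcomp_list C xs) = hcomp_list D (map (fC F) xs)"
  using assms
proof (induction xs rule: induct_list012)
  case (3 x y zs)
  then show ?case
    using hcomp_list_cell[of C "y # zs"] double_functor_dchcmp[of C D F x "hcomp_list C (y # zs)"]
      double_functor_cell[of C D F x] double_functor_cell[of C D F y]
    by auto
qed auto

lemma hcomposites_singleton: "x \<in> S \<Longrightarrow> x \<in> hcomposites E S"
  unfolding hcomposites_def by (intro CollectI exI[of _ "[x]"]) auto

section \<open>The globularily generated piece\<close>

lemma gcells_subset_dCells: "double_category C \<Longrightarrow> gcells C \<subseteq> dCells C"
proof
  fix \<Phi> assume "\<Phi> \<in> gcells C" and "double_category C"
  then show "\<Phi> \<in> dCells C"
    by (induction rule: gcells.induct)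
       (auto simp: globular_def dcvid_cell dchid_cell dcvcmp_cell dchcmp_cell)
qed

lemma gamma_simps [simp]:
  "dOb (gamma C) = dOb C" "dVM (gamma C) = dVM C" "dCells (gamma C) = gcells C"
  "dleft (gamma C) = dleft C" "dright (gamma C) = dright C" "dtop (gamma C) = dtop C"
  "dbot (gamma C) = dbot C" "dvid (gamma C) = dvid C" "dcvid (gamma C) = dcvid C"
  "dcvcmp (gamma C) = dcvcmp C" "dchcmp (gamma C) = dchcmp C" "dchid (gamma C) = dchid C"
  by (simp_all add: gamma_def)

lemma double_functor_gcells:
  assumes "\<Phi> \<in> gcells C" "double_category C" "double_functor C D F"
  shows "fC F \<Phi> \<in> gcells D"
  using assms
proof (induction rule: gcells.induct)
  case (glob \<Phi>)
  show ?case by (rule gcells.glob[OF double_functor_globular[OF glob(3,1)]])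
next
  case (vid h)
  then show ?case using double_functor_dcvid[OF vid(3,1)] gcells.vid[of "fH F h" D] by simp
next
  case (hid f)
  then show ?case using double_functor_dchid[OF hid(3,1)] gcells.hid[of "fV F f" D] by simp
next
  case (vcmp \<Phi> \<Psi>)
  have cells: "\<Phi> \<in> dCells C" "\<Psi> \<in> dCells C"
    using vcmp.hyps(1,2) gcells_subset_dCells[OF vcmp.prems(1)] by blast+
  have "dbot D (fC F \<Phi>) = dtop D (fC F \<Psi>)"
    using double_functor_cell[OF vcmp.prems(2)] cells vcmp.hyps(3) by simp
  then show ?case
    using double_functor_dcvcmp[OF vcmp.prems(2) cells vcmp.hyps(3)] vcmp.IH
    by (simp add: gcells.vcmp vcmp.prems)
next
  case (hcmp \<Phi> \<Psi>)
  have cells: "\<Phi> \<in> dCells C" "\<Psi> \<in> dCells C"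
    using hcmp.hyps(1,2) gcells_subset_dCells[OF hcmp.prems(1)] by blast+
  have "dright D (fC F \<Phi>) = dleft D (fC F \<Psi>)"
    using double_functor_cell[OF hcmp.prems(2)] cells hcmp.hyps(3) by simp
  then show ?case
    using double_functor_dchcmp[OF hcmp.prems(2) cells hcmp.hyps(3)] hcmp.IH
    by (simp add: gcells.hcmp hcmp.prems)
qed

section \<open>Horizontal categories\<close>

text \<open>The horizontal categories of \<open>\<gamma>C\<close> are those of \<open>C\<close>, since all globular 2-morphisms
  and horizontal identities of \<open>C\<close> already lie in \<open>\<gamma>C\<close>.\<close>

lemma vgen_gamma: "vgen (gamma C) S = vgen C S"
proof
  show "vgen (gamma C) S \<subseteq> vgen C S"
    by (rule subsetI, erule vgen.induct) (auto intro: vgen.intros)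
  show "vgen C S \<subseteq> vgen (gamma C) S"
    by (rule subsetI, erule vgen.induct) (auto intro: vgen.intros[where E = "gamma C", simplified])
qed

lemma hcomposites_gamma: "hcomposites (gamma C) S = hcomposites C S"
proof -
  have "hcomp_list (gamma C) xs = hcomp_list C xs" for xs
    by (induction xs rule: induct_list012) auto
  then show ?thesis by (simp add: hcomposites_def hcomposable_def)
qed

lemma H1_gamma: "double_category C \<Longrightarrow> H1 (gamma C) = H1 C"
  using gcells_subset_dCells by (auto simp: H1_def globular_def intro: gcells.glob[unfolded globular_def])

lemma Hn_gamma: "double_category C \<Longrightarrow> Hn (gamma C) n = Hn C n"
  by (induction C n rule: Hn.induct) (auto simp: H1_gamma vgen_gamma hcomposites_gamma)

lemma vgen_subset:
  assumes "double_category C" "S \<subseteq> dCells C" "\<And>h. h \<in> dHM C \<Longrightarrow> dcvid C h \<in> T"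
    "\<And>\<Phi> \<Psi>. \<Phi> \<in> T \<Longrightarrow> \<Psi> \<in> T \<Longrightarrow> dbot C \<Phi> = dtop C \<Psi> \<Longrightarrow> dcvcmp C \<Psi> \<Phi> \<in> T" "S \<subseteq> T"
  shows "vgen C S \<subseteq> dCells C \<inter> T"
proof
  fix \<Phi> assume "\<Phi> \<in> vgen C S"
  then show "\<Phi> \<in> dCells C \<inter> T"
  proof (induction rule: vgen.induct)
    case (gen \<Phi>)
    then show ?case using assms(2,5) by blast
  next
    case (idtop \<Phi>)
    then have "dtop C \<Phi> \<in> dHM C" using dcell_sides_horizontal[OF assms(1), of \<Phi>] by simp
    then show ?case using dcvid_cell[OF assms(1)] assms(3) by simp
  next
    case (idbot \<Phi>)
    then have "dbot C \<Phi> \<in> dHM C" using dcell_sides_horizontal[OF assms(1), of \<Phi>] by simp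
    then show ?case using dcvid_cell[OF assms(1)] assms(3) by simp
  next
    case (cmp \<Phi> \<Psi>)
    then show ?case using dcvcmp_cell[OF assms(1)] assms(4) by simp
  qed
qed

lemma vgen_subset_dCells: "double_category C \<Longrightarrow> S \<subseteq> dCells C \<Longrightarrow> vgen C S \<subseteq> dCells C"
  using vgen_subset[of C S UNIV] by blast

lemma vgen_subset_gcells: "double_category C \<Longrightarrow> S \<subseteq> gcells C \<Longrightarrow> vgen C S \<subseteq> gcells C"
  using vgen_subset[of C S "gcells C"] gcells_subset_dCells[of C] by (blast intro: gcells.vid gcells.vcmp)

lemma hcomposites_subset_gcells:
  assumes "double_category C" "S \<subseteq> gcells C"
  shows "hcomposites C S \<subseteq> gcells C"
proof -
  have "hcomp_list C xs \<in> gcells C" if "xs \<noteq> []" "set xs \<subseteq> S" "hcomposable C xs" for xs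
    using that
  proof (induction xs rule: induct_list012)
    case (3 x y zs)
    then have "dleft C (hcomp_list C (y # zs)) = dleft C y"
      using assms gcells_subset_dCells[of C] hcomp_list_cell[of C "y # zs"] by auto
    with 3 assms show ?case by (auto intro: gcells.hcmp)
  qed (use assms in auto)
  then show ?thesis unfolding hcomposites_def by blast
qed

lemma Hn_subset_gcells: "double_category C \<Longrightarrow> Hn C n \<subseteq> gcells C"
proof (induction C n rule: Hn.induct)
  case (2 E)
  then show ?case by (auto simp: H1_def intro: gcells.glob gcells.hid)
next
  case (3 E k)
  then have "vgen E (Hn E (Suc k)) \<subseteq> gcells E" by (simp add: vgen_subset_gcells)
  with 3 show ?case by (simp add: hcomposites_subset_gcells)
qed simp

lemma Hn_subset_dCells: "double_category C \<Longrightarrow> Hn C n \<subseteq> dCells C"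
  using Hn_subset_gcells gcells_subset_dCells by blast

lemma Hn_mono:
  assumes "1 \<le> m" "m \<le> n"
  shows "Hn C m \<subseteq> Hn C n"
  using assms(2)
proof (induction n rule: dec_induct)
  case (step n)
  from assms(1) step(1) obtain k where "n = Suc k" by (cases n) auto
  then have "Hn C n \<subseteq> Hn C (Suc n)" by (auto intro: hcomposites_singleton vgen.gen)
  with step(3) show ?case by blast
qed simp

lemma Hn_directed:
  assumes "1 \<le> m" "\<Phi> \<in> Hn C m" "1 \<le> n" "\<Psi> \<in> Hn C n"
  obtains k where "1 \<le> k" "\<Phi> \<in> Hn C k" "\<Psi> \<in> Hn C k"
proof
  show "1 \<le> max m n" "\<Phi> \<in> Hn C (max m n)" "\<Psi> \<in> Hn C (max m n)"
    using assms Hn_mono[of m "max m n" C] Hn_mono[of n "max m n" C] by auto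
qed

lemma dchid_in_Hn: "1 \<le> n \<Longrightarrow> f \<in> dVM C \<Longrightarrow> dchid C f \<in> Hn C n"
  using Hn_mono[of 1 n C] by (auto simp: H1_def)

text \<open>A horizontal identity absorbs its neighbour, so only globular composites need checking.\<close>

lemma H1_dchcmp:
  assumes C: "double_category C" and "\<Phi> \<in> H1 C" "\<Psi> \<in> H1 C" and lr: "dright C \<Phi> = dleft C \<Psi>"
  shows "dchcmp C \<Phi> \<Psi> \<in> H1 C"
proof -
  have cells: "\<Phi> \<in> dCells C" "\<Psi> \<in> dCells C"
    using assms Hn_subset_dCells[OF C, of 1] by auto
  consider "globular C \<Phi>" "globular C \<Psi>" | f where "f \<in> dVM C" "\<Psi> = dchid C f"
    | f where "f \<in> dVM C" "\<Phi> = dchid C f"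
    using assms(2,3) unfolding H1_def by blast
  then show ?thesis
  proof cases
    case 1
    with C cells lr show ?thesis by (auto simp: H1_def globular_def dchcmp_cell)
  next
    case (2 f)
    then have "\<Psi> = dchid C (dright C \<Phi>)" using C lr dchid_cell by metis
    then show ?thesis using dchcmp_units[OF C cells(1)] assms(2) by simp
  next
    case (3 f)
    then have "\<Phi> = dchid C (dleft C \<Psi>)" using C lr dchid_cell by metis
    then show ?thesis using dchcmp_units[OF C cells(2)] assms(3) by simp
  qed
qed

lemma hcomposites_dchcmp:
  assumes C: "double_category C" and S: "S \<subseteq> dCells C"
    and "\<Phi> \<in> hcomposites C S" "\<Psi> \<in> hcomposites C S" "dright C \<Phi> = dleft C \<Psi>"
  shows "dchcmp C \<Phi> \<Psi> \<in> hcomposites C S"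
proof -
  obtain xs ys where
    xs: "\<Phi> = hcomp_list C xs" "xs \<noteq> []" "set xs \<subseteq> S" "hcomposable C xs" and
    ys: "\<Psi> = hcomp_list C ys" "ys \<noteq> []" "set ys \<subseteq> S" "hcomposable C ys"
    using assms(3,4) unfolding hcomposites_def by blast
  have "dright C (last xs) = dleft C (hd ys)"
    using assms(5) hcomp_list_cell[OF C xs(2) _ xs(4)] hcomp_list_cell[OF C ys(2) _ ys(4)] xs ys S
    by auto
  then have "hcomposable C (xs @ ys) \<and> hcomp_list C (xs @ ys) = dchcmp C \<Phi> \<Psi>"
    using hcomp_list_append[OF C xs(2) ys(2) _ _ xs(4) ys(4)] xs ys S by auto
  then show ?thesis using xs ys unfolding hcomposites_def by (intro CollectI exI[of _ "xs @ ys"]) auto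
qed

lemma Hn_dchcmp:
  assumes C: "double_category C" and n: "1 \<le> n"
    and "\<Phi> \<in> Hn C n" "\<Psi> \<in> Hn C n" "dright C \<Phi> = dleft C \<Psi>"
  shows "dchcmp C \<Phi> \<Psi> \<in> Hn C n"
proof -
  obtain k where k: "n = Suc k" using n by (cases n) auto
  show ?thesis
  proof (cases k)
    case 0
    with assms k show ?thesis using H1_dchcmp by simp
  next
    case (Suc j)
    have "vgen C (Hn C (Suc j)) \<subseteq> dCells C"
      using vgen_subset_dCells[OF C Hn_subset_dCells[OF C]] .
    with assms k Suc show ?thesis using hcomposites_dchcmp[OF C] by simp
  qed
qed

lemma gcells_in_Hn:
  assumes "\<Phi> \<in> gcells C" "double_category C"
  obtains n where "1 \<le> n" "\<Phi> \<in> Hn C n"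
proof -
  from assms have "\<exists>n\<ge>1. \<Phi> \<in> Hn C n"
  proof (induction rule: gcells.induct)
    case (glob \<Phi>)
    then show ?case by (intro exI[of _ 1]) (simp add: H1_def)
  next
    case (vid h)
    then have "globular C (dcvid C h)" using dcvid_cell[OF vid(2,1)] by (auto simp: globular_def)
    then show ?case by (intro exI[of _ 1]) (simp add: H1_def)
  next
    case (hid f)
    then show ?case by (intro exI[of _ 1]) (simp add: H1_def)
  next
    case (vcmp \<Phi> \<Psi>)
    then obtain m n where "1 \<le> m" "\<Phi> \<in> Hn C m" "1 \<le> n" "\<Psi> \<in> Hn C n" by blast
    then obtain k where k: "1 \<le> k" "\<Phi> \<in> Hn C k" "\<Psi> \<in> Hn C k" by (rule Hn_directed)
    then obtain j where j: "k = Suc j" by (cases k) auto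
    have "dcvcmp C \<Psi> \<Phi> \<in> vgen C (Hn C k)"
      using vgen.cmp[OF vgen.gen[OF k(2)] vgen.gen[OF k(3)] vcmp.hyps(3)] .
    then have "dcvcmp C \<Psi> \<Phi> \<in> Hn C (Suc k)" using j hcomposites_singleton by simp
    then show ?case by (intro exI[of _ "Suc k"]) simp
  next
    case (hcmp \<Phi> \<Psi>)
    then obtain m n where "1 \<le> m" "\<Phi> \<in> Hn C m" "1 \<le> n" "\<Psi> \<in> Hn C n" by blast
    then obtain k where k: "1 \<le> k" "\<Phi> \<in> Hn C k" "\<Psi> \<in> Hn C k" by (rule Hn_directed)
    then show ?case using Hn_dchcmp[OF hcmp.prems k(1-3) hcmp.hyps(3)] by blast
  qed
  with that show ?thesis by blast
qed

lemma double_functor_vgen: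
  assumes C: "double_category C" and F: "double_functor C D F"
    and S: "S \<subseteq> dCells C" and ST: "fC F ` S \<subseteq> T"
    and "\<Phi> \<in> vgen C S"
  shows "fC F \<Phi> \<in> vgen D T"
  using assms(5)
proof (induction rule: vgen.induct)
  case (gen \<Phi>)
  then show ?case using ST by (blast intro: vgen.gen)
next
  case (idtop \<Phi>)
  have "\<Phi> \<in> dCells C" using vgen_subset_dCells[OF C S] idtop.hyps by blast
  then have "fC F (dcvid C (dtop C \<Phi>)) = dcvid D (dtop D (fC F \<Phi>))"
    using double_functor_dcvid[OF F] double_functor_cell[OF F] dcell_sides_horizontal[OF C] by simp
  then show ?case using vgen.idtop[OF idtop.IH] by simp
next
  case (idbot \<Phi>)
  have "\<Phi> \<in> dCells C" using vgen_subset_dCells[OF C S] idbot.hyps by blast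
  then have "fC F (dcvid C (dbot C \<Phi>)) = dcvid D (dbot D (fC F \<Phi>))"
    using double_functor_dcvid[OF F] double_functor_cell[OF F] dcell_sides_horizontal[OF C] by simp
  then show ?case using vgen.idbot[OF idbot.IH] by simp
next
  case (cmp \<Phi> \<Psi>)
  have cells: "\<Phi> \<in> dCells C" "\<Psi> \<in> dCells C"
    using vgen_subset_dCells[OF C S] cmp.hyps(1,2) by blast+
  then have "dbot D (fC F \<Phi>) = dtop D (fC F \<Psi>)"
    using double_functor_cell[OF F] cmp.hyps(3) by simp
  then show ?case
    using double_functor_dcvcmp[OF F cells cmp.hyps(3)] vgen.cmp[OF cmp.IH] by simp
qed

lemma double_functor_hcomposites:
  assumes C: "double_category C" and F: "double_functor C D F"
    and S: "S \<subseteq> dCells C" and ST: "fC F ` S \<subseteq> T"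
    and "\<Phi> \<in> hcomposites C S"
  shows "fC F \<Phi> \<in> hcomposites D T"
proof -
  obtain xs where xs: "\<Phi> = hcomp_list C xs" "xs \<noteq> []" "set xs \<subseteq> S" "hcomposable C xs"
    using assms(5) unfolding hcomposites_def by blast
  then have "hcomposable D (map (fC F) xs) \<and> fC F \<Phi> = hcomp_list D (map (fC F) xs)"
    using hcomp_list_map[OF F C] S by auto
  moreover have "set (map (fC F) xs) \<subseteq> T" using xs(3) ST by auto
  ultimately show ?thesis
    using xs(2) unfolding hcomposites_def by (intro CollectI exI[of _ "map (fC F) xs"]) auto
qed

lemma double_functor_Hn:
  assumes "double_category C" "double_functor C D F" "\<Phi> \<in> Hn C n"
  shows "fC F \<Phi> \<in> Hn D n"
  using assms
proof (induction C n arbitrary: \<Phi> rule: Hn.induct)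
  case (2 E)
  then show ?case
    using double_functor_globular[OF "2.prems"(2)] double_functor_dchid[OF "2.prems"(2)]
    by (auto simp: H1_def)
next
  case (3 E k)
  note E = "3.prems"(1) and F = "3.prems"(2)
  have "fC F ` Hn E (Suc k) \<subseteq> Hn D (Suc k)" using "3.IH"[OF E F] by blast
  then have "fC F ` vgen E (Hn E (Suc k)) \<subseteq> vgen D (Hn D (Suc k))"
    using double_functor_vgen[OF E F Hn_subset_dCells[OF E]] by blast
  then show ?case
    using double_functor_hcomposites[OF E F vgen_subset_dCells[OF E Hn_subset_dCells[OF E]]] "3.prems"(3)
    by simp
qed simp

section \<open>Wide subcategories of the transversal category\<close>

definition tau_on :: "('o,'v,'h,'c) dcat \<Rightarrow> 'c set \<Rightarrow> ('v,'c) cat" where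
  "tau_on C S = (tau C)\<lparr>cMor := S\<rparr>"

lemma tau_on_simps [simp]:
  "cObj (tau_on C S) = dVM C" "cMor (tau_on C S) = S" "cDom (tau_on C S) = dleft C"
  "cCod (tau_on C S) = dright C" "cComp (tau_on C S) = (\<lambda>g f. dchcmp C f g)" "cId (tau_on C S) = dchid C"
  by (simp_all add: tau_on_def tau_def)

lemma category_tau_on:
  assumes C: "double_category C" and S: "S \<subseteq> dCells C"
    and ids: "\<And>f. f \<in> dVM C \<Longrightarrow> dchid C f \<in> S"
    and comp: "\<And>\<Phi> \<Psi>. \<Phi> \<in> S \<Longrightarrow> \<Psi> \<in> S \<Longrightarrow> dright C \<Phi> = dleft C \<Psi> \<Longrightarrow> dchcmp C \<Phi> \<Psi> \<in> S"
  shows "category (tau_on C S)"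
  unfolding category_def tau_on_simps
proof (intro conjI ballI impI)
  fix f assume f: "f \<in> dVM C"
  show "dchid C f \<in> S" using ids[OF f] .
  show "dleft C (dchid C f) = f" "dright C (dchid C f) = f" using dchid_cell[OF C f] by auto
next
  fix \<Phi> assume "\<Phi> \<in> S"
  then have \<Phi>: "\<Phi> \<in> dCells C" using S by blast
  show "dleft C \<Phi> \<in> dVM C" "dright C \<Phi> \<in> dVM C" using dcell_sides_vertical[OF C \<Phi>] by auto
  show "dchcmp C (dchid C (dleft C \<Phi>)) \<Phi> = \<Phi>" "dchcmp C \<Phi> (dchid C (dright C \<Phi>)) = \<Phi>"
    using dchcmp_units[OF C \<Phi>] by auto
next
  fix \<Phi> \<Psi> assume "\<Phi> \<in> S" "\<Psi> \<in> S" and lr: "dright C \<Phi> = dleft C \<Psi>"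
  then have "\<Phi> \<in> dCells C" "\<Psi> \<in> dCells C" using S by blast+
  then show "dchcmp C \<Phi> \<Psi> \<in> S" "dleft C (dchcmp C \<Phi> \<Psi>) = dleft C \<Phi>"
    "dright C (dchcmp C \<Phi> \<Psi>) = dright C \<Psi>"
    using comp[OF \<open>\<Phi> \<in> S\<close> \<open>\<Psi> \<in> S\<close> lr] dchcmp_cell[OF C _ _ lr] by auto
next
  fix \<Phi> \<Psi> \<Xi> assume "\<Phi> \<in> S" "\<Psi> \<in> S" "\<Xi> \<in> S"
    and "dright C \<Phi> = dleft C \<Psi>" "dright C \<Psi> = dleft C \<Xi>"
  with S show "dchcmp C (dchcmp C \<Phi> \<Psi>) \<Xi> = dchcmp C \<Phi> (dchcmp C \<Psi> \<Xi>)"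
    using dchcmp_assoc[OF C] by blast
qed

lemma is_functor_tau_on:
  assumes F: "double_functor C D F" and S: "S \<subseteq> dCells C" and ST: "fC F ` S \<subseteq> T"
    and ids: "\<And>f. f \<in> dVM C \<Longrightarrow> dchid C f \<in> S"
    and comp: "\<And>\<Phi> \<Psi>. \<Phi> \<in> S \<Longrightarrow> \<Psi> \<in> S \<Longrightarrow> dright C \<Phi> = dleft C \<Psi> \<Longrightarrow> dchcmp C \<Phi> \<Psi> \<in> S"
  shows "is_functor (tau_on C S) (tau_on D T) \<lparr>fo = fV F, fm = restr (fC F) S\<rparr>"
  unfolding is_functor_def tau_on_simps fctr.simps
proof (intro conjI ballI impI)
  fix f assume f: "f \<in> dVM C"
  show "fV F f \<in> dVM D" "restr (fC F) S (dchid C f) = dchid D (fV F f)"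
    using double_functor_dchid[OF F f] ids[OF f] by (auto simp: restr_def)
next
  fix \<Phi> assume \<Phi>: "\<Phi> \<in> S"
  with S have "\<Phi> \<in> dCells C" by blast
  with \<Phi> ST show "restr (fC F) S \<Phi> \<in> T" "dleft D (restr (fC F) S \<Phi>) = fV F (dleft C \<Phi>)"
    "dright D (restr (fC F) S \<Phi>) = fV F (dright C \<Phi>)"
    using double_functor_cell[OF F] by (auto simp: restr_def)
next
  fix \<Phi> \<Psi> assume "\<Phi> \<in> S" "\<Psi> \<in> S" and lr: "dright C \<Phi> = dleft C \<Psi>"
  moreover from this S have "\<Phi> \<in> dCells C" "\<Psi> \<in> dCells C" by blast+
  ultimately show "restr (fC F) S (dchcmp C \<Phi> \<Psi>) = dchcmp D (restr (fC F) S \<Phi>) (restr (fC F) S \<Psi>)"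
    using comp double_functor_dchcmp[OF F] by (simp add: restr_def)
qed

lemma fcomp_fid [simp]: "fcomp F fid = F" "fcomp fid F = F"
  by (simp_all add: fcomp_def fid_def)

lemma is_dCat_Cat_functor_tau_on:
  assumes FOb: "\<And>C. double_category C \<Longrightarrow> FOb G C = tau_on C (S C)"
    and FMor: "\<And>C D F. double_category C \<Longrightarrow> FMor G C D F = \<lparr>fo = fV F, fm = restr (fC F) (S C)\<rparr>"
    and sub: "\<And>C. double_category C \<Longrightarrow> S C \<subseteq> dCells C"
    and ids: "\<And>C f. double_category C \<Longrightarrow> f \<in> dVM C \<Longrightarrow> dchid C f \<in> S C"
    and comp: "\<And>C \<Phi> \<Psi>. double_category C \<Longrightarrow> \<Phi> \<in> S C \<Longrightarrow> \<Psi> \<in> S C \<Longrightarrow>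
      dright C \<Phi> = dleft C \<Psi> \<Longrightarrow> dchcmp C \<Phi> \<Psi> \<in> S C"
    and pres: "\<And>C D F \<Phi>. double_category C \<Longrightarrow> double_functor C D F \<Longrightarrow> \<Phi> \<in> S C \<Longrightarrow> fC F \<Phi> \<in> S D"
  shows "is_dCat_Cat_functor G"
  unfolding is_dCat_Cat_functor_def
proof (intro conjI allI impI)
  fix C :: "('a,'b,'c,'d) dcat" assume C: "double_category C"
  show "category (FOb G C)"
    unfolding FOb[OF C] by (rule category_tau_on[OF C sub[OF C] ids[OF C] comp[OF C]])
  show "functor_eq (FOb G C) (FMor G C C (dfid C)) fid"
    using sub[OF C] unfolding FOb[OF C] FMor[OF C] functor_eq_def
    by (auto simp: dfid_def fid_def restr_def)
next
  fix C D :: "('a,'b,'c,'d) dcat" and F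
  assume C: "double_category C" and D: "double_category D" and F: "double_functor C D F"
  show "is_functor (FOb G C) (FOb G D) (FMor G C D F)"
    unfolding FOb[OF C] FOb[OF D] FMor[OF C]
    using pres[OF C F] by (intro is_functor_tau_on[OF F sub[OF C] _ ids[OF C] comp[OF C]]) blast
next
  fix C D E :: "('a,'b,'c,'d) dcat" and F F'
  assume C: "double_category C" and D: "double_category D" and "double_category E"
    and F: "double_functor C D F" and "double_functor D E F'"
  show "functor_eq (FOb G C) (FMor G C E (dfcomp C F' F)) (fcomp (FMor G D E F') (FMor G C D F))"
    using sub[OF C] pres[OF C F] unfolding FOb[OF C] FMor[OF C] FMor[OF D] functor_eq_def
    by (auto simp: dfcomp_def fcomp_def restr_def subset_iff)
qed

lemma nat_trans_inclusion:
  assumes FOb_G: "\<And>C. double_category C \<Longrightarrow> FOb G C = tau_on C (S C)"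
    and FMor_G: "\<And>C D F. double_category C \<Longrightarrow> FMor G C D F = \<lparr>fo = fV F, fm = restr (fC F) (S C)\<rparr>"
    and FOb_H: "\<And>C. double_category C \<Longrightarrow> FOb H C = tau_on C (T C)"
    and FMor_H: "\<And>C D F. double_category C \<Longrightarrow> FMor H C D F = \<lparr>fo = fV F, fm = restr (fC F) (T C)\<rparr>"
    and sub: "\<And>C. double_category C \<Longrightarrow> S C \<subseteq> T C"
  shows "nat_trans G H (\<lambda>C. fid)"
  unfolding nat_trans_def
proof (intro conjI allI impI)
  fix C :: "('a,'b,'c,'d) dcat" assume C: "double_category C"
  show "is_functor (FOb G C) (FOb H C) fid"
    using sub[OF C] unfolding FOb_G[OF C] FOb_H[OF C] is_functor_def by (auto simp: fid_def)
  fix D F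
  show "functor_eq (FOb G C) (fcomp (FMor H C D F) fid) (fcomp fid (FMor G C D F))"
    using sub[OF C] unfolding FOb_G[OF C] FMor_G[OF C] FMor_H[OF C] functor_eq_def
    by (auto simp: restr_def)
qed

section \<open>The functors \<open>\<gamma>\<^sup>\<tau>\<close> and \<open>H\<^sub>n\<gamma>\<close> and the cocone of inclusions\<close>

lemma FOb_gamma_tau: "FOb gamma_tau C = tau_on C (gcells C)"
  by (simp add: gamma_tau_def tau_on_def tau_def)

lemma FMor_gamma_tau: "FMor gamma_tau C D F = \<lparr>fo = fV F, fm = restr (fC F) (gcells C)\<rparr>"
  by (simp add: gamma_tau_def tauF_def gammaF_def)

lemma FOb_Hgamma: "double_category C \<Longrightarrow> FOb (Hgamma n) C = tau_on C (Hn C n)"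
  by (simp add: Hgamma_def Hcat_def Hn_gamma tau_on_def tau_def)

lemma FMor_Hgamma:
  "double_category C \<Longrightarrow> FMor (Hgamma n) C D F = \<lparr>fo = fV F, fm = restr (fC F) (Hn C n)\<rparr>"
  using Hn_subset_gcells[of C n]
  by (auto simp: Hgamma_def Hn_gamma tauF_def gammaF_def restr_def fun_eq_iff)

lemma gamma_tau_is_dCat_Cat_functor: "is_dCat_Cat_functor gamma_tau"
  by (rule is_dCat_Cat_functor_tau_on[OF FOb_gamma_tau FMor_gamma_tau gcells_subset_dCells])
     (auto intro: gcells.hid gcells.hcmp double_functor_gcells)

lemma Hgamma_is_dCat_Cat_functor: "1 \<le> n \<Longrightarrow> is_dCat_Cat_functor (Hgamma n)"
  by (rule is_dCat_Cat_functor_tau_on[OF FOb_Hgamma FMor_Hgamma Hn_subset_dCells])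
     (auto intro: dchid_in_Hn Hn_dchcmp double_functor_Hn)

lemma nu_nat_trans: "1 \<le> m \<Longrightarrow> m \<le> n \<Longrightarrow> nat_trans (Hgamma m) (Hgamma n) (nu m n)"
  using nat_trans_inclusion[OF FOb_Hgamma FMor_Hgamma FOb_Hgamma FMor_Hgamma Hn_mono]
  by (simp add: nu_def[abs_def])

lemma iota_is_cocone: "is_cocone (gamma_tau :: ('o,'v,'h,'c,'v,'c) dCatFun) iota"
  unfolding is_cocone_def
proof (intro conjI allI impI)
  fix n :: nat
  have "nat_trans (Hgamma n) (gamma_tau :: ('o,'v,'h,'c,'v,'c) dCatFun) (\<lambda>C. fid)"
    by (rule nat_trans_inclusion[where S = "\<lambda>C. Hn C n" and T = gcells])
       (simp_all add: FOb_Hgamma FMor_Hgamma FOb_gamma_tau FMor_gamma_tau Hn_subset_gcells)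
  then show "nat_trans (Hgamma n) (gamma_tau :: ('o,'v,'h,'c,'v,'c) dCatFun) (iota n)" by (simp add: iota_def[abs_def])
next
  fix m n :: nat and C :: "('o,'v,'h,'c) dcat"
  show "functor_eq (FOb (Hgamma m) C) (fcomp (iota n C) (nu m n C)) (iota m C)"
    by (simp add: iota_def nu_def functor_eq_def)
qed

section \<open>The universal property\<close>

lemma cocone_leg_is_functor:
  assumes "is_cocone G \<alpha>" "1 \<le> n" "double_category C"
  shows "is_functor (tau_on C (Hn C n)) (FOb G C) (\<alpha> n C)"
  using assms FOb_Hgamma[OF assms(3), of n] unfolding is_cocone_def nat_trans_def by metis

lemma cocone_leg_natural:
  assumes "is_cocone G \<alpha>" "1 \<le> n" "double_category C" "double_category D" "double_functor C D F"
  shows "functor_eq (tau_on C (Hn C n)) (fcomp (FMor G C D F) (\<alpha> n C))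
    (fcomp (\<alpha> n D) \<lparr>fo = fV F, fm = restr (fC F) (Hn C n)\<rparr>)"
  using assms FOb_Hgamma[OF assms(3), of n] FMor_Hgamma[OF assms(3), of n D F]
  unfolding is_cocone_def nat_trans_def by metis

lemma cocone_legs_agree:
  assumes "is_cocone G \<alpha>" "double_category C" "1 \<le> m" "m \<le> n"
  shows "\<forall>a\<in>dVM C. fo (\<alpha> n C) a = fo (\<alpha> m C) a" "\<forall>\<Phi>\<in>Hn C m. fm (\<alpha> n C) \<Phi> = fm (\<alpha> m C) \<Phi>"
proof -
  have "functor_eq (FOb (Hgamma m) C) (fcomp (\<alpha> n C) (nu m n C)) (\<alpha> m C)"
    using assms unfolding is_cocone_def by blast
  then show "\<forall>a\<in>dVM C. fo (\<alpha> n C) a = fo (\<alpha> m C) a" "\<forall>\<Phi>\<in>Hn C m. fm (\<alpha> n C) \<Phi> = fm (\<alpha> m C) \<Phi>"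
    by (simp_all add: FOb_Hgamma[OF assms(2)] nu_def functor_eq_def)
qed

text \<open>A 2-morphism of \<open>\<gamma>C\<close> is sent by the leg of any \<open>H\<^sub>n\<close> containing it; by compatibility of
  the legs the choice does not matter.\<close>

definition cocone_extension ::
    "(nat \<Rightarrow> ('o,'v,'h,'c) dcat \<Rightarrow> ('v,'c,'a,'b) fctr) \<Rightarrow> ('o,'v,'h,'c) dcat \<Rightarrow> ('v,'c,'a,'b) fctr" where
  "cocone_extension \<alpha> C = \<lparr>fo = fo (\<alpha> 1 C), fm = (\<lambda>\<Phi>. fm (\<alpha> (SOME n. 1 \<le> n \<and> \<Phi> \<in> Hn C n) C) \<Phi>)\<rparr>"

lemma cocone_extension_fo:
  assumes "is_cocone G \<alpha>" "double_category C" "1 \<le> n" "a \<in> dVM C"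
  shows "fo (cocone_extension \<alpha> C) a = fo (\<alpha> n C) a"
  using cocone_legs_agree(1)[OF assms(1-3) order_refl] cocone_legs_agree(1)[OF assms(1,2) order_refl assms(3)] assms(4)
  by (simp add: cocone_extension_def)

lemma cocone_extension_fm:
  assumes "is_cocone G \<alpha>" "double_category C" "1 \<le> n" "\<Phi> \<in> Hn C n"
  shows "fm (cocone_extension \<alpha> C) \<Phi> = fm (\<alpha> n C) \<Phi>"
proof -
  define k where "k = (SOME n. 1 \<le> n \<and> \<Phi> \<in> Hn C n)"
  have k: "1 \<le> k" "\<Phi> \<in> Hn C k"
    using someI[of "\<lambda>n. 1 \<le> n \<and> \<Phi> \<in> Hn C n" n] assms(3,4) unfolding k_def by auto
  have "fm (\<alpha> k C) \<Phi> = fm (\<alpha> (max k n) C) \<Phi>"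
    using cocone_legs_agree(2)[OF assms(1,2) k(1), of "max k n"] k(2) by simp
  also have "\<dots> = fm (\<alpha> n C) \<Phi>"
    using cocone_legs_agree(2)[OF assms(1,2,3), of "max k n"] assms(4) by simp
  finally show ?thesis by (simp add: cocone_extension_def k_def)
qed

lemma cocone_extension_is_functor:
  assumes \<alpha>: "is_cocone G \<alpha>" and C: "double_category C"
  shows "is_functor (tau_on C (gcells C)) (FOb G C) (cocone_extension \<alpha> C)"
  unfolding is_functor_def tau_on_simps
proof (intro conjI ballI impI)
  fix f assume f: "f \<in> dVM C"
  have "dchid C f \<in> Hn C 1" using dchid_in_Hn[OF order_refl f] .
  with cocone_leg_is_functor[OF \<alpha> order_refl C] f
  show "fo (cocone_extension \<alpha> C) f \<in> cObj (FOb G C)"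
    "fm (cocone_extension \<alpha> C) (dchid C f) = cId (FOb G C) (fo (cocone_extension \<alpha> C) f)"
    using cocone_extension_fo[OF \<alpha> C order_refl f] cocone_extension_fm[OF \<alpha> C order_refl]
    unfolding is_functor_def by simp_all
next
  fix \<Phi> assume "\<Phi> \<in> gcells C"
  then obtain n where n: "1 \<le> n" "\<Phi> \<in> Hn C n" using C by (rule gcells_in_Hn)
  have "dleft C \<Phi> \<in> dVM C" "dright C \<Phi> \<in> dVM C"
    using dcell_sides_vertical[OF C] Hn_subset_dCells[OF C] n(2) by blast+
  with n cocone_leg_is_functor[OF \<alpha> n(1) C]
  show "fm (cocone_extension \<alpha> C) \<Phi> \<in> cMor (FOb G C)"
    "cDom (FOb G C) (fm (cocone_extension \<alpha> C) \<Phi>) = fo (cocone_extension \<alpha> C) (dleft C \<Phi>)"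
    "cCod (FOb G C) (fm (cocone_extension \<alpha> C) \<Phi>) = fo (cocone_extension \<alpha> C) (dright C \<Phi>)"
    using cocone_extension_fo[OF \<alpha> C n(1)] cocone_extension_fm[OF \<alpha> C n]
    unfolding is_functor_def by simp_all
next
  fix \<Phi> \<Psi> assume "\<Phi> \<in> gcells C" "\<Psi> \<in> gcells C" and lr: "dright C \<Phi> = dleft C \<Psi>"
  then obtain l m where "1 \<le> l" "\<Phi> \<in> Hn C l" "1 \<le> m" "\<Psi> \<in> Hn C m"
    using C by (meson gcells_in_Hn)
  then obtain n where n: "1 \<le> n" "\<Phi> \<in> Hn C n" "\<Psi> \<in> Hn C n" by (rule Hn_directed)
  have "dchcmp C \<Phi> \<Psi> \<in> Hn C n" using Hn_dchcmp[OF C n lr] .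
  with n lr cocone_leg_is_functor[OF \<alpha> n(1) C]
  show "fm (cocone_extension \<alpha> C) (dchcmp C \<Phi> \<Psi>) =
      cComp (FOb G C) (fm (cocone_extension \<alpha> C) \<Psi>) (fm (cocone_extension \<alpha> C) \<Phi>)"
    using cocone_extension_fm[OF \<alpha> C n(1)] unfolding is_functor_def by simp
qed

lemma cocone_extension_nat_trans:
  assumes \<alpha>: "is_cocone (G :: ('o,'v,'h,'c,'a,'b) dCatFun) \<alpha>"
  shows "nat_trans gamma_tau G (cocone_extension \<alpha>)"
  unfolding nat_trans_def FOb_gamma_tau FMor_gamma_tau
proof (intro conjI allI impI)
  fix C D :: "('o,'v,'h,'c) dcat" and F
  assume C: "double_category C" and D: "double_category D" and F: "double_functor C D F"
  show "functor_eq (tau_on C (gcells C)) (fcomp (FMor G C D F) (cocone_extension \<alpha> C))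
      (fcomp (cocone_extension \<alpha> D) \<lparr>fo = fV F, fm = restr (fC F) (gcells C)\<rparr>)"
    unfolding functor_eq_def tau_on_simps
  proof (intro conjI ballI)
    fix f assume f: "f \<in> dVM C"
    then have "fV F f \<in> dVM D" using double_functor_dchid[OF F f] by simp
    then show "fo (fcomp (FMor G C D F) (cocone_extension \<alpha> C)) f =
        fo (fcomp (cocone_extension \<alpha> D) \<lparr>fo = fV F, fm = restr (fC F) (gcells C)\<rparr>) f"
      using cocone_leg_natural[OF \<alpha> order_refl C D F] f
        cocone_extension_fo[OF \<alpha> C order_refl f] cocone_extension_fo[OF \<alpha> D order_refl]
      by (simp add: functor_eq_def fcomp_def)
  next
    fix \<Phi> assume \<Phi>: "\<Phi> \<in> gcells C"
    then obtain n where n: "1 \<le> n" "\<Phi> \<in> Hn C n" using C by (rule gcells_in_Hn)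
    have "fC F \<Phi> \<in> Hn D n" using double_functor_Hn[OF C F n(2)] .
    then show "fm (fcomp (FMor G C D F) (cocone_extension \<alpha> C)) \<Phi> =
        fm (fcomp (cocone_extension \<alpha> D) \<lparr>fo = fV F, fm = restr (fC F) (gcells C)\<rparr>) \<Phi>"
      using cocone_leg_natural[OF \<alpha> n(1) C D F] n \<Phi>
        cocone_extension_fm[OF \<alpha> C n] cocone_extension_fm[OF \<alpha> D n(1)]
      by (simp add: functor_eq_def fcomp_def restr_def)
  qed
qed (rule cocone_extension_is_functor[OF \<alpha>])

definition factors_cocone ::
    "('o,'v,'h,'c,'a,'b) dCatFun \<Rightarrow> (nat \<Rightarrow> ('o,'v,'h,'c) dcat \<Rightarrow> ('v,'c,'a,'b) fctr) \<Rightarrow>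
      (('o,'v,'h,'c) dcat \<Rightarrow> ('v,'c,'a,'b) fctr) \<Rightarrow> bool" where
  "factors_cocone G \<alpha> \<beta> \<longleftrightarrow> nat_trans gamma_tau G \<beta> \<and>
     (\<forall>n C. 1 \<le> n \<longrightarrow> double_category C \<longrightarrow>
        functor_eq (FOb (Hgamma n) C) (fcomp (\<beta> C) (iota n C)) (\<alpha> n C))"

lemma cocone_extension_factors:
  assumes \<alpha>: "is_cocone (G :: ('o,'v,'h,'c,'a,'b) dCatFun) \<alpha>"
  shows "factors_cocone G \<alpha> (cocone_extension \<alpha>)"
  unfolding factors_cocone_def
proof (intro conjI allI impI)
  fix n :: nat and C :: "('o,'v,'h,'c) dcat" assume n: "1 \<le> n" and C: "double_category C"
  show "functor_eq (FOb (Hgamma n) C) (fcomp (cocone_extension \<alpha> C) (iota n C)) (\<alpha> n C)"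
    using cocone_extension_fo[OF \<alpha> C n] cocone_extension_fm[OF \<alpha> C n]
    by (simp add: FOb_Hgamma[OF C] functor_eq_def iota_def)
qed (rule cocone_extension_nat_trans[OF \<alpha>])

lemma factors_cocone_unique:
  assumes "factors_cocone G \<alpha> \<beta>" "factors_cocone G \<alpha> \<beta>'" "double_category C"
  shows "functor_eq (FOb gamma_tau C) (\<beta> C) (\<beta>' C)"
proof -
  have agree: "(\<forall>a\<in>dVM C. fo (\<beta> C) a = fo (\<beta>' C) a) \<and> (\<forall>\<Phi>\<in>Hn C n. fm (\<beta> C) \<Phi> = fm (\<beta>' C) \<Phi>)"
    if "1 \<le> n" for n
    using assms that unfolding factors_cocone_def
    by (simp add: FOb_Hgamma[OF assms(3)] functor_eq_def iota_def)
  show ?thesis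
    unfolding functor_eq_def FOb_gamma_tau tau_on_simps
  proof (intro conjI ballI)
    fix a assume "a \<in> dVM C"
    then show "fo (\<beta> C) a = fo (\<beta>' C) a" using agree[OF order_refl] by blast
  next
    fix \<Phi> assume "\<Phi> \<in> gcells C"
    then obtain n where "1 \<le> n" "\<Phi> \<in> Hn C n" using assms(3) by (rule gcells_in_Hn)
    then show "fm (\<beta> C) \<Phi> = fm (\<beta>' C) \<Phi>" using agree by blast
  qed
qed

lemma gamma_tau_is_colimit:
  "\<forall>(G :: ('o,'v,'h,'c,'a,'b) dCatFun) \<alpha>. is_dCat_Cat_functor G \<and> is_cocone G \<alpha> \<longrightarrow>
     (\<exists>\<beta>. factors_cocone G \<alpha> \<beta>) \<and>
     (\<forall>\<beta> \<beta>'. factors_cocone G \<alpha> \<beta> \<and> factors_cocone G \<alpha> \<beta>' \<longrightarrow>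
        (\<forall>C. double_category C \<longrightarrow> functor_eq (FOb gamma_tau C) (\<beta> C) (\<beta>' C)))"
proof (intro allI impI conjI)
  fix G :: "('o,'v,'h,'c,'a,'b) dCatFun" and \<alpha> \<beta> \<beta>' and C :: "('o,'v,'h,'c) dcat"
  assume "is_dCat_Cat_functor G \<and> is_cocone G \<alpha>"
  then show "\<exists>\<beta>. factors_cocone G \<alpha> \<beta>" by (blast intro: cocone_extension_factors)
  assume "factors_cocone G \<alpha> \<beta> \<and> factors_cocone G \<alpha> \<beta>'" and "double_category C"
  then show "functor_eq (FOb gamma_tau C) (\<beta> C) (\<beta>' C)" by (elim conjE) (rule factors_cocone_unique)
qed

theorem proposition5p3:
  shows "is_dCat_Cat_functor (gamma_tau :: ('o,'v,'h,'c,'v,'c) dCatFun) \<and>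
    (\<forall>n\<ge>1. is_dCat_Cat_functor (Hgamma n :: ('o,'v,'h,'c,'v,'c) dCatFun)) \<and>
    (\<forall>m n. 1 \<le> m \<and> m \<le> n \<longrightarrow>
       nat_trans (Hgamma m :: ('o,'v,'h,'c,'v,'c) dCatFun) (Hgamma n) (nu m n)) \<and>
    is_cocone (gamma_tau :: ('o,'v,'h,'c,'v,'c) dCatFun) iota \<and>
    (\<forall>(G :: ('o,'v,'h,'c,'a,'b) dCatFun) \<alpha>. is_dCat_Cat_functor G \<and> is_cocone G \<alpha> \<longrightarrow>
       (\<exists>\<beta>. nat_trans gamma_tau G \<beta> \<and>
          (\<forall>n C. 1 \<le> n \<longrightarrow> double_category C \<longrightarrow>
             functor_eq (FOb (Hgamma n) C) (fcomp (\<beta> C) (iota n C)) (\<alpha> n C))) \<and>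
       (\<forall>\<beta> \<beta>'. nat_trans gamma_tau G \<beta> \<and>
          (\<forall>n C. 1 \<le> n \<longrightarrow> double_category C \<longrightarrow>
             functor_eq (FOb (Hgamma n) C) (fcomp (\<beta> C) (iota n C)) (\<alpha> n C)) \<and>
          nat_trans gamma_tau G \<beta>' \<and>
          (\<forall>n C. 1 \<le> n \<longrightarrow> double_category C \<longrightarrow>
             functor_eq (FOb (Hgamma n) C) (fcomp (\<beta>' C) (iota n C)) (\<alpha> n C)) \<longrightarrow>
          (\<forall>C. double_category C \<longrightarrow> functor_eq (FOb gamma_tau C) (\<beta> C) (\<beta>' C))))"
  \<comment> \<open>\<open>conj_assoc\<close> flattens the two conjoined factorisations as the statement writes them\<close>
  by (intro conjI; (fact gamma_tau_is_colimit[unfolded factors_cocone_def conj_assoc])?;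
      simp add: gamma_tau_is_dCat_Cat_functor Hgamma_is_dCat_Cat_functor nu_nat_trans iota_is_cocone)

end
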